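(* Let $X$ be a real Hausdorff locally convex topological vector space, let $V\subseteq X$ be convex and let $U\subseteq V$ be self-segment-dense in $V$. Then for every subset $\mathcal S\subseteq U$ one has $\operatorname{cl}(\operatorname{co}(\mathcal S)\cap U)=\operatorname{cl}(\operatorname{co}(\mathcal S))$; moreover, $\operatorname{co}(\mathcal S)\cap U$ is self-segment-dense in $\operatorname{co}(\mathcal S)$.
   Context: $\operatorname{co}$ denotes the convex hull and $\operatorname{cl}$ the closure. For $x,y\in X$, $[x,y]=\{x+t(y-x):t\in[0,1]\}$. A set $P$ is dense in $D$ if $D\subseteq\operatorname{cl}(P)$. Definition (self-segment-dense): for a convex set $V\subseteq X$ and $U\subseteq V$, $U$ is self-segment-dense in $V$ if $U$ is dense in $V$ and for all $x,y\in U$ the set $[x,y]\cap U$ is dense in $[x,y]$. *)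

theory Defs
  imports "HOL-Analysis.Analysis"
begin

text \<open>The Hausdorff property is imposed via the type class t2_space.\<close>
definition real_lctvs :: "'a::{real_vector,topological_space} itself \<Rightarrow> bool" where
  "real_lctvs _ \<longleftrightarrow>
     continuous_on UNIV (\<lambda>p::'a \<times> 'a. fst p + snd p) \<and>
     continuous_on UNIV (\<lambda>p::real \<times> 'a. fst p *\<^sub>R snd p) \<and>
     (\<forall>(x::'a) S. open S \<and> x \<in> S \<longrightarrow> (\<exists>C. open C \<and> convex C \<and> x \<in> C \<and> C \<subseteq> S))"

definition dense_in :: "'a::topological_space set \<Rightarrow> 'a set \<Rightarrow> bool" where
  "dense_in P D \<longleftrightarrow> D \<subseteq> closure P"

text \<open>U is self-segment-dense in V (V convex, U a subset of V is assumed separately).\<close>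
definition self_segment_dense :: "'a::{real_vector,topological_space} set \<Rightarrow> 'a set \<Rightarrow> bool" where
  "self_segment_dense U V \<longleftrightarrow>
     dense_in U V \<and> (\<forall>x\<in>U. \<forall>y\<in>U. dense_in (closed_segment x y \<inter> U) (closed_segment x y))"

end

theory Submission
  imports Defs
begin

text \<open>Let \<open>B = co(S) \<inter> U\<close>. Any two points of \<open>B\<close> span a segment inside \<open>co(S)\<close>, and segment
  density of \<open>U\<close> puts that segment into the closure of its part in \<open>U\<close>, hence into \<open>cl B\<close>.
  By continuity of the vector operations \<open>cl B\<close> is then convex; it contains \<open>S\<close>, so it
  contains \<open>co(S)\<close>.\<close>

lemma continuous_on_scaleR_const:
  assumes "continuous_on UNIV (\<lambda>p::real \<times> 'a::{real_vector,topological_space}. fst p *\<^sub>R snd p)"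
  shows "continuous_on A (\<lambda>x::'a. c *\<^sub>R x)"
proof -
  have "continuous_on A ((\<lambda>p::real \<times> 'a. fst p *\<^sub>R snd p) \<circ> (\<lambda>x. (c, x)))"
    by (intro continuous_on_compose continuous_intros continuous_on_subset[OF assms]) auto
  then show ?thesis by (simp add: o_def)
qed

lemma convex_closure_if_segments_in_closure:
  fixes B :: "'a::{real_vector,topological_space} set"
  assumes add: "continuous_on UNIV (\<lambda>p::'a \<times> 'a. fst p + snd p)"
    and smul: "continuous_on UNIV (\<lambda>p::real \<times> 'a. fst p *\<^sub>R snd p)"
    and segments: "\<And>p q. p \<in> B \<Longrightarrow> q \<in> B \<Longrightarrow> closed_segment p q \<subseteq> closure B"
  shows "convex (closure B)"
  unfolding convex_alt
proof (intro ballI allI impI)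
  fix p q and u :: real
  assume p: "p \<in> closure B" and q: "q \<in> closure B" and u: "0 \<le> u \<and> u \<le> 1"
  define f where "f = (\<lambda>z::'a \<times> 'a. (1 - u) *\<^sub>R fst z + u *\<^sub>R snd z)"
  have "continuous_on (closure (B \<times> B)) ((\<lambda>p::'a \<times> 'a. fst p + snd p) \<circ>
      (\<lambda>z. ((1 - u) *\<^sub>R fst z, u *\<^sub>R snd z)))"
    by (intro continuous_on_compose continuous_on_Pair continuous_on_subset[OF add]
        continuous_on_compose2[OF continuous_on_scaleR_const[OF smul]]
        continuous_on_fst continuous_on_snd continuous_on_id) auto
  then have "continuous_on (closure (B \<times> B)) f"
    by (simp add: f_def o_def)
  moreover have "f ` (B \<times> B) \<subseteq> closure B"
    using segments u by (force simp: f_def in_segment)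
  ultimately have "f ` closure (B \<times> B) \<subseteq> closure B"
    by (intro image_closure_subset) auto
  moreover have "(p, q) \<in> closure (B \<times> B)"
    using p q by (simp add: closure_Times)
  ultimately show "(1 - u) *\<^sub>R p + u *\<^sub>R q \<in> closure B"
    by (force simp: f_def)
qed

lemma closed_segment_subset_closure_inter_convex:
  assumes seg: "closed_segment x y \<subseteq> closure (closed_segment x y \<inter> U)"
    and "convex K" "x \<in> K" "y \<in> K"
  shows "closed_segment x y \<subseteq> closure (closed_segment x y \<inter> (K \<inter> U))"
proof -
  have "closed_segment x y \<subseteq> K"
    using assms by (intro closed_segment_subset)
  then have "closed_segment x y \<inter> (K \<inter> U) = closed_segment x y \<inter> U"
    by blast
  then show ?thesis
    using seg by simp
qed

lemma convex_hull_subset_closure_inter: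
  fixes U S :: "'a::{real_vector,topological_space} set"
  assumes add: "continuous_on UNIV (\<lambda>p::'a \<times> 'a. fst p + snd p)"
    and smul: "continuous_on UNIV (\<lambda>p::real \<times> 'a. fst p *\<^sub>R snd p)"
    and seg: "\<And>x y. x \<in> U \<Longrightarrow> y \<in> U \<Longrightarrow> closed_segment x y \<subseteq> closure (closed_segment x y \<inter> U)"
    and "S \<subseteq> U"
  shows "convex hull S \<subseteq> closure (convex hull S \<inter> U)"
proof (rule hull_minimal)
  show "S \<subseteq> closure (convex hull S \<inter> U)"
    using \<open>S \<subseteq> U\<close> hull_subset[of S convex] closure_subset by blast
  show "convex (closure (convex hull S \<inter> U))"
  proof (rule convex_closure_if_segments_in_closure[OF add smul])
    fix p q assume "p \<in> convex hull S \<inter> U" "q \<in> convex hull S \<inter> U"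
    then have "closed_segment p q \<subseteq> closure (closed_segment p q \<inter> (convex hull S \<inter> U))"
      using seg by (intro closed_segment_subset_closure_inter_convex) auto
    also have "\<dots> \<subseteq> closure (convex hull S \<inter> U)"
      by (intro closure_mono) auto
    finally show "closed_segment p q \<subseteq> closure (convex hull S \<inter> U)" .
  qed
qed

theorem mainTheorem1:
  fixes V U S :: "'a::{real_vector,t2_space} set"
  assumes "real_lctvs TYPE('a)"
    and "convex V"
    and "U \<subseteq> V"
    and "self_segment_dense U V"
    and "S \<subseteq> U"
  shows "closure (convex hull S \<inter> U) = closure (convex hull S)
         \<and> self_segment_dense (convex hull S \<inter> U) (convex hull S)"
proof -
  have add: "continuous_on UNIV (\<lambda>p::'a \<times> 'a. fst p + snd p)"
    and smul: "continuous_on UNIV (\<lambda>p::real \<times> 'a. fst p *\<^sub>R snd p)"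
    using assms(1) unfolding real_lctvs_def by auto
  have seg: "\<And>x y. x \<in> U \<Longrightarrow> y \<in> U \<Longrightarrow> closed_segment x y \<subseteq> closure (closed_segment x y \<inter> U)"
    using assms(4) unfolding self_segment_dense_def dense_in_def by auto
  have hull: "convex hull S \<subseteq> closure (convex hull S \<inter> U)"
    using convex_hull_subset_closure_inter[OF add smul seg \<open>S \<subseteq> U\<close>] by blast
  then have "closure (convex hull S \<inter> U) = closure (convex hull S)"
    by (metis closure_closure closure_mono inf_le1 subset_antisym)
  moreover have "self_segment_dense (convex hull S \<inter> U) (convex hull S)"
    using hull seg convex_convex_hull[of S]
    unfolding self_segment_dense_def dense_in_def
    by (auto intro!: closed_segment_subset_closure_inter_convex[THEN subsetD])
  ultimately show ?thesis by blast
qed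

end
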